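(* Let $\mu$ satisfy Assumption A (see context), let $t>1$, and let $\mathcal{K}$ be a compact subset of $\mathbb{C}^+\cup\mathbb{R}$. Then there exists a constant $C>0$ such that $|\omega_t(z)|\le C$ for all $z\in\mathcal{K}$.
   Context: Assumption A: $n_{\mathrm{ac}},n_{\mathrm{pp}},n^{\mathrm{out}}_{\mathrm{pp}}\ge1$ integers; $\mu$ is a compactly supported Borel probability measure on $\mathbb{R}$ whose singular part is supported on a finite set $\{x_1,\dots,x_{n_{\mathrm{pp}}}\}$, whose absolutely continuous part $\mu_{\mathrm{ac}}$ is supported on $n_{\mathrm{ac}}$ intervals $[E_j^-,E_j^+]$, with exactly $n^{\mathrm{out}}_{\mathrm{pp}}$ atoms outside $\mathrm{supp}(\mu_{\mathrm{ac}})$, no atom at the endpoints $E_j^\pm$, and density $\rho$ with $C_j^{-1}<\rho(x)/\big((x-E_j^-)^{t_j^-}(E_j^+-x)^{t_j^+}\big)<C_j$ a.e. on $[E_j^-,E_j^+]$ for some $-1<t_j^\pm<1$, $C_j\ge1$. $m_\mu(z)=\int\frac{1}{x-z}\mu(dx)$, $F_\mu=-1/m_\mu$. $\omega_t:\mathbb{C}^+\to\mathbb{C}^+$ is the analytic subordination function with $\mathrm{Im}\,\omega_t(z)\ge\mathrm{Im}\,z$, $\omega_t(i\eta)/(i\eta)\to1$, $t\omega_t(z)-z=(t-1)F_\mu(\omega_t(z))$, extended continuously to $\mathbb{C}^+\cup\mathbb{R}$ with values in $\mathbb{C}^+\cup\mathbb{R}\cup\{\infty\}$. *)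

theory Defs
  imports "HOL-Probability.Probability"
begin

definition upper_half :: "complex set" where
  "upper_half = {z. Im z > 0}"

definition assumptionA :: "nat \<Rightarrow> nat \<Rightarrow> nat \<Rightarrow> real measure \<Rightarrow> bool" where
  "assumptionA nac npp nout \<mu> \<longleftrightarrow>
     nac \<ge> 1 \<and> npp \<ge> 1 \<and> nout \<ge> 1 \<and>
     prob_space \<mu> \<and> sets \<mu> = sets borel \<and>
     (\<exists>P w \<rho> Em Ep tm tp Cj.
        finite P \<and> card P = npp \<and> (\<forall>p\<in>P. w p > (0::real)) \<and>
        \<rho> \<in> borel_measurable borel \<and> (\<forall>x. \<rho> x \<ge> (0::real)) \<and>
        (\<forall>A\<in>sets borel. emeasure \<mu> A =
            (\<integral>\<^sup>+x\<in>A. ennreal (\<rho> x) \<partial>lborel) +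
            (\<Sum>p\<in>P. if p \<in> A then ennreal (w p) else 0)) \<and>
        (\<forall>j<nac. Em j < (Ep j :: real)) \<and>
        (\<forall>j. Suc j < nac \<longrightarrow> Ep j < Em (Suc j)) \<and>
        (\<forall>x. (\<forall>j<nac. x \<notin> {Em j..Ep j}) \<longrightarrow> \<rho> x = 0) \<and>
        (\<forall>j<nac. -1 < tm j \<and> tm j < (1::real) \<and> -1 < tp j \<and> tp j < (1::real) \<and>
           Cj j \<ge> (1::real) \<and>
           (AE x in lborel. x \<in> {Em j..Ep j} \<longrightarrow>
              1 / Cj j < \<rho> x / ((x - Em j) powr tm j * (Ep j - x) powr tp j) \<and>
              \<rho> x / ((x - Em j) powr tm j * (Ep j - x) powr tp j) < Cj j)) \<and>
        (\<forall>j<nac. Em j \<notin> P \<and> Ep j \<notin> P) \<and>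
        card {p\<in>P. \<forall>j<nac. p \<notin> {Em j..Ep j}} = nout)"

definition stieltjes :: "real measure \<Rightarrow> complex \<Rightarrow> complex" where
  "stieltjes \<mu> z = (\<integral>x. 1 / (complex_of_real x - z) \<partial>\<mu>)"

definition F_of :: "real measure \<Rightarrow> complex \<Rightarrow> complex" where
  "F_of \<mu> z = - 1 / stieltjes \<mu> z"

text \<open>Subordination function omega_t on the upper half plane, together with its
  continuous extension omext to the closed upper half plane with values in
  the closed upper half plane or infinity (None encodes infinity).\<close>
definition is_subordination ::
  "real measure \<Rightarrow> real \<Rightarrow> (complex \<Rightarrow> complex) \<Rightarrow> (complex \<Rightarrow> complex option) \<Rightarrow> bool" where
  "is_subordination \<mu> t \<omega> omext \<longleftrightarrow>
     \<omega> holomorphic_on upper_half \<and>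
     (\<forall>z\<in>upper_half. Im (\<omega> z) \<ge> Im z) \<and>
     ((\<lambda>\<eta>::real. \<omega> (\<i> * of_real \<eta>) / (\<i> * of_real \<eta>)) \<longlongrightarrow> 1) at_top \<and>
     (\<forall>z\<in>upper_half. of_real t * \<omega> z - z = of_real (t - 1) * F_of \<mu> (\<omega> z)) \<and>
     (\<forall>z\<in>upper_half. omext z = Some (\<omega> z)) \<and>
     (\<forall>x::real. case omext (of_real x) of
         Some w \<Rightarrow> Im w \<ge> 0 \<and> (\<omega> \<longlongrightarrow> w) (at (of_real x) within upper_half)
       | None \<Rightarrow> filterlim \<omega> at_infinity (at (of_real x) within upper_half))"

end

theory Submission
  imports Defs
begin

text \<open>Since \<open>\<mu>\<close> has compact support, \<open>F\<^sub>\<mu>(w) = w + O(1)\<close> for large \<open>|w|\<close>. Taking norms in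
  the subordination equation \<open>t \<omega> - z = (t - 1) F\<^sub>\<mu>(\<omega>)\<close> then gives
  \<open>|\<omega>\<^sub>t(z)| \<le> |z| + const\<close> on the upper half plane. This bound passes to the boundary
  values by continuity and in particular rules out the value \<open>\<infinity>\<close> there.\<close>

lemma (in prob_space) norm_integral_le_const:
  fixes f :: "'a \<Rightarrow> 'b::{banach, second_countable_topology}"
  assumes "integrable M f" "AE x in M. norm (f x) \<le> B"
  shows "norm (integral\<^sup>L M f) \<le> B"
  using integral_norm_bound integral_le_const[OF integrable_norm[OF assms(1)] assms(2)]
  by (rule order_trans)

lemma assumptionA_bounded_support:
  assumes "assumptionA nac npp nout \<mu>"
  shows "\<exists>R>0. AE x in \<mu>. \<bar>x\<bar> \<le> R"
proof -
  from assms obtain P w \<rho> Em Ep where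
    fin: "finite P" and sets: "sets \<mu> = sets borel" and
    emeasure: "\<forall>A\<in>sets borel. emeasure \<mu> A =
            (\<integral>\<^sup>+x\<in>A. ennreal (\<rho> x) \<partial>lborel) +
            (\<Sum>p\<in>P. if p \<in> A then ennreal (w p) else 0)" and
    \<rho>_outside: "\<forall>x. (\<forall>j<nac. x \<notin> {Em j..Ep j}) \<longrightarrow> \<rho> x = 0"
    unfolding assumptionA_def by blast
  have "bounded (Em ` {..<nac} \<union> Ep ` {..<nac} \<union> P)"
    using fin by (intro finite_imp_bounded) auto
  then obtain a where a: "\<forall>x\<in>Em ` {..<nac} \<union> Ep ` {..<nac} \<union> P. \<bar>x\<bar> \<le> a"
    unfolding bounded_real by blast
  define R where "R = \<bar>a\<bar> + 1"
  define A where "A = {x::real. R < \<bar>x\<bar>}"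
  have A_borel: "A \<in> sets borel" unfolding A_def by measurable
  have "\<rho> x = 0" if "x \<in> A" for x
  proof -
    have "\<forall>j<nac. x \<notin> {Em j..Ep j}"
    proof (intro allI impI notI)
      fix j
      assume "j < nac" "x \<in> {Em j..Ep j}"
      moreover from a \<open>j < nac\<close> have "\<bar>Em j\<bar> \<le> a" "\<bar>Ep j\<bar> \<le> a" by auto
      ultimately show False using that by (auto simp: A_def R_def)
    qed
    then show ?thesis using \<rho>_outside by blast
  qed
  then have "(\<integral>\<^sup>+x\<in>A. ennreal (\<rho> x) \<partial>lborel) = 0"
    by (intro nn_integral_zero') (auto simp: indicator_def)
  moreover have "(\<Sum>p\<in>P. if p \<in> A then ennreal (w p) else 0) = 0"
    using a by (intro sum.neutral) (force simp: A_def R_def)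
  ultimately have "emeasure \<mu> A = 0"
    using emeasure A_borel by simp
  then have "AE x in \<mu>. \<bar>x\<bar> \<le> R"
    using A_borel sets by (intro AE_I[where N=A]) (auto simp: A_def)
  moreover have "R > 0"
    unfolding R_def by simp
  ultimately show ?thesis by blast
qed

lemma integral_div_sub_bounded_support:
  fixes M :: "real measure"
  assumes "prob_space M" and sets: "sets M = sets borel" and support: "AE x in M. \<bar>x\<bar> \<le> R"
    and "Im w > 0" "R < cmod w"
  shows "integrable M (\<lambda>x. complex_of_real x / (complex_of_real x - w))"
    and "cmod (\<integral>x. complex_of_real x / (complex_of_real x - w) \<partial>M) \<le> R / (cmod w - R)"
proof -
  interpret prob_space M by fact
  have "AE x in M. cmod (complex_of_real x / (complex_of_real x - w)) \<le> R / (cmod w - R)"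
    using support
  proof eventually_elim
    case (elim x)
    have "cmod w - R \<le> cmod (complex_of_real x - w)"
      using elim norm_triangle_ineq3[of w "complex_of_real x"] by (simp add: norm_minus_commute)
    with elim assms(5) show ?case
      by (simp add: norm_divide frac_le)
  qed
  moreover have "(\<lambda>x. complex_of_real x / (complex_of_real x - w)) \<in> borel_measurable M"
    unfolding measurable_cong_sets[OF sets refl] by measurable
  ultimately show "integrable M (\<lambda>x. complex_of_real x / (complex_of_real x - w))"
    and "cmod (\<integral>x. complex_of_real x / (complex_of_real x - w) \<partial>M) \<le> R / (cmod w - R)"
    by (auto intro: integrable_const_bound norm_integral_le_const)
qed

lemma stieltjes_mult_eq:
  fixes M :: "real measure"
  assumes "prob_space M" and "integrable M (\<lambda>x. complex_of_real x / (complex_of_real x - w))" and "Im w > 0"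
  shows "w * stieltjes M w = (\<integral>x. complex_of_real x / (complex_of_real x - w) \<partial>M) - 1"
proof -
  have "w * stieltjes M w = (\<integral>x. w * (1 / (complex_of_real x - w)) \<partial>M)"
    unfolding stieltjes_def by (rule integral_mult_right_zero[symmetric])
  also have "\<dots> = (\<integral>x. complex_of_real x / (complex_of_real x - w) - 1 \<partial>M)"
  proof (rule Bochner_Integration.integral_cong[OF refl])
    fix x :: real
    have "complex_of_real x - w \<noteq> 0"
      using assms(3) by (auto simp: complex_eq_iff)
    then show "w * (1 / (complex_of_real x - w)) = complex_of_real x / (complex_of_real x - w) - 1"
      by (simp add: field_simps)
  qed
  also have "\<dots> = (\<integral>x. complex_of_real x / (complex_of_real x - w) \<partial>M) - 1"
  proof -
    interpret prob_space M by fact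
    show ?thesis using assms(2) by (simp add: Bochner_Integration.integral_diff prob_space)
  qed
  finally show ?thesis .
qed

text \<open>With \<open>S = \<integral> x / (x - w) d\<mu>\<close> one has \<open>w m\<^sub>\<mu>(w) = S - 1\<close>, hence
  \<open>F\<^sub>\<mu>(w) - w = - S w / (w m\<^sub>\<mu>(w))\<close> with \<open>|S| \<le> 1/2\<close> and \<open>|w m\<^sub>\<mu>(w)| \<ge> 1/2\<close>.\<close>
lemma norm_F_of_minus_le:
  fixes M :: "real measure"
  assumes P: "prob_space M" and sets: "sets M = sets borel" and support: "AE x in M. \<bar>x\<bar> \<le> R"
    and "R > 0" and w: "Im w > 0" "3 * R \<le> cmod w"
  shows "cmod (F_of M w - w) \<le> 3 * R"
proof -
  define S where "S = (\<integral>x. complex_of_real x / (complex_of_real x - w) \<partial>M)"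
  define m where "m = stieltjes M w"
  have "R < cmod w" using assms by linarith
  note moment = integral_div_sub_bounded_support[OF P sets support w(1) this]
  have S_le: "cmod S \<le> R / (cmod w - R)"
    unfolding S_def by (rule moment(2))
  have wm: "w * m = S - 1"
    unfolding S_def m_def by (rule stieltjes_mult_eq[OF P moment(1) w(1)])
  have half: "R / (cmod w - R) \<le> 1/2"
    using assms by (simp add: field_simps)
  have "1 - cmod S \<le> cmod (S - 1)"
    by (metis norm_one norm_triangle_ineq2 norm_minus_commute)
  then have wm_ge: "1/2 \<le> cmod (w * m)"
    using S_le half unfolding wm by linarith
  then have "m \<noteq> 0" "w \<noteq> 0" by auto
  have "F_of M w - w = - (1 + w * m) * w / (w * m)"
    unfolding F_of_def m_def[symmetric] using \<open>m \<noteq> 0\<close> \<open>w \<noteq> 0\<close> by (simp add: field_simps)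
  also have "1 + w * m = S"
    using wm by simp
  finally have "cmod (F_of M w - w) = cmod S * cmod w / cmod (w * m)"
    by (simp add: norm_divide norm_mult)
  also have "\<dots> \<le> (R / (cmod w - R)) * cmod w / (1/2)"
    using S_le wm_ge \<open>R < cmod w\<close> \<open>R > 0\<close> by (intro frac_le mult_right_mono) auto
  also have "\<dots> \<le> 3 * R"
    using assms by (simp add: field_simps)
  finally show ?thesis .
qed

lemma norm_le_of_subordination_eq:
  fixes F :: "complex \<Rightarrow> complex"
  assumes "t > 1" "B \<ge> 0"
    and F_near_id: "B \<le> cmod w \<Longrightarrow> cmod (F w - w) \<le> B"
    and eq: "of_real t * w - z = of_real (t - 1) * F w"
  shows "cmod w \<le> cmod z + B * t"
proof (cases "cmod w < B")
  case True
  moreover have "B \<le> B * t"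
    using assms(1,2) mult_left_mono[of 1 t B] by simp
  ultimately show ?thesis
    using norm_ge_zero[of z] by linarith
next
  case False
  then have "cmod (F w) \<le> cmod w + B"
    using F_near_id norm_triangle_ineq2[of "F w" w] by linarith
  have "t * cmod w - cmod z \<le> cmod (of_real t * w - z)"
    using norm_triangle_ineq2[of "of_real t * w" z] assms(1) by (simp add: norm_mult)
  also have "\<dots> = (t - 1) * cmod (F w)"
    unfolding eq norm_mult norm_of_real using assms(1) by simp
  also have "\<dots> \<le> (t - 1) * (cmod w + B)"
    using \<open>cmod (F w) \<le> cmod w + B\<close> assms(1) by (intro mult_left_mono) auto
  finally show ?thesis
    using assms by (simp add: algebra_simps)
qed

lemma at_within_upper_half_neq_bot:
  assumes "Im z \<ge> 0"
  shows "at z within upper_half \<noteq> bot"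
proof -
  have "z islimpt upper_half"
    unfolding islimpt_approachable
  proof (intro allI impI)
    fix e :: real
    assume "e > 0"
    then show "\<exists>y\<in>upper_half. y \<noteq> z \<and> dist y z < e"
      using assms
      by (intro bexI[of _ "z + \<i> * of_real (e/2)"])
         (auto simp: upper_half_def dist_norm norm_mult complex_eq_iff)
  qed
  then show ?thesis
    using trivial_limit_within by blast
qed

lemma is_subordination_boundary_norm_le:
  assumes sub: "is_subordination \<mu> t \<omega> omext"
    and bound: "\<forall>y\<in>upper_half. cmod (\<omega> y) \<le> cmod y + B"
    and "Im z \<ge> 0"
  shows "\<exists>w. omext z = Some w \<and> cmod w \<le> cmod z + B"
proof (cases "Im z > 0")
  case True
  then show ?thesis
    using sub bound unfolding is_subordination_def upper_half_def by auto
next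
  case False
  with assms(3) have z: "z = of_real (Re z)"
    by (simp add: complex_eq_iff)
  have boundary: "case omext z of
         Some w \<Rightarrow> Im w \<ge> 0 \<and> (\<omega> \<longlongrightarrow> w) (at z within upper_half)
       | None \<Rightarrow> filterlim \<omega> at_infinity (at z within upper_half)"
    using sub z unfolding is_subordination_def by metis
  have nontrivial: "at z within upper_half \<noteq> bot"
    using at_within_upper_half_neq_bot assms(3) .
  have near: "\<forall>\<^sub>F y in at z within upper_half. cmod (\<omega> y) \<le> cmod y + B"
    using bound by (simp add: eventually_at_filter always_eventually)
  have lim: "((\<lambda>y. cmod y + B) \<longlongrightarrow> cmod z + B) (at z within upper_half)"
    by (intro tendsto_intros)
  show ?thesis
  proof (cases "omext z")
    case (Some w)
    then have "(\<omega> \<longlongrightarrow> w) (at z within upper_half)"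
      using boundary by simp
    then have "cmod w \<le> cmod z + B"
      using tendsto_le[OF nontrivial lim tendsto_norm near] by blast
    then show ?thesis using Some by blast
  next
    case None
    then have "filterlim \<omega> at_infinity (at z within upper_half)"
      using boundary by simp
    then have "\<forall>\<^sub>F y in at z within upper_half. cmod z + B + 1 < cmod (\<omega> y)"
      using filterlim_at_infinity_imp_norm_at_top unfolding filterlim_at_top_dense by blast
    moreover have "\<forall>\<^sub>F y in at z within upper_half. cmod y + B < cmod z + B + 1"
      by (rule order_tendstoD(2)[OF lim]) simp
    ultimately have "\<forall>\<^sub>F y in at z within upper_half. False"
      using near by eventually_elim simp
    with nontrivial show ?thesis
      by (simp add: eventually_False)
  qed
qed

lemma is_subordination_norm_le:
  fixes \<mu> :: "real measure"
  assumes sub: "is_subordination \<mu> t \<omega> omext" and "t > 1"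
    and P: "prob_space \<mu>" and sets: "sets \<mu> = sets borel"
    and support: "AE x in \<mu>. \<bar>x\<bar> \<le> R" and "R > 0"
    and z: "z \<in> upper_half"
  shows "cmod (\<omega> z) \<le> cmod z + 3 * R * t"
proof (rule norm_le_of_subordination_eq[where F = "F_of \<mu>"])
  have "Im (\<omega> z) > 0"
    using sub z unfolding is_subordination_def upper_half_def by force
  then show "3 * R \<le> cmod (\<omega> z) \<Longrightarrow> cmod (F_of \<mu> (\<omega> z) - \<omega> z) \<le> 3 * R"
    using norm_F_of_minus_le[OF P sets support \<open>R > 0\<close>] by blast
  show "of_real t * \<omega> z - z = of_real (t - 1) * F_of \<mu> (\<omega> z)"
    using sub z unfolding is_subordination_def by blast
qed (use \<open>t > 1\<close> \<open>R > 0\<close> in auto)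

theorem lemma3p3:
  fixes \<mu> :: "real measure" and t :: real and K :: "complex set"
    and \<omega> :: "complex \<Rightarrow> complex" and omext :: "complex \<Rightarrow> complex option"
  assumes "assumptionA nac npp nout \<mu>"
    and "t > 1"
    and "is_subordination \<mu> t \<omega> omext"
    and "compact K" and "K \<subseteq> {z. Im z \<ge> 0}"
  shows "\<exists>C>0. \<forall>z\<in>K. \<exists>w. omext z = Some w \<and> cmod w \<le> C"
proof -
  obtain R where "R > 0" and support: "AE x in \<mu>. \<bar>x\<bar> \<le> R"
    using assumptionA_bounded_support[OF assms(1)] by blast
  have "prob_space \<mu>" and "sets \<mu> = sets borel"
    using assms(1) unfolding assumptionA_def by blast+
  then have "\<forall>z\<in>upper_half. cmod (\<omega> z) \<le> cmod z + 3 * R * t"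
    using is_subordination_norm_le[OF assms(3,2)] support \<open>R > 0\<close> by blast
  then have boundary: "\<exists>w. omext z = Some w \<and> cmod w \<le> cmod z + 3 * R * t" if "Im z \<ge> 0" for z
    using is_subordination_boundary_norm_le[OF assms(3)] that by blast
  obtain r where r: "\<forall>z\<in>K. cmod z \<le> r"
    using compact_imp_bounded[OF assms(4)] unfolding bounded_iff by blast
  have "\<forall>z\<in>K. \<exists>w. omext z = Some w \<and> cmod w \<le> \<bar>r\<bar> + 3 * R * t + 1"
    using boundary r assms(5) by (fastforce dest!: bspec)
  moreover have "\<bar>r\<bar> + 3 * R * t + 1 > 0"
    using \<open>R > 0\<close> assms(2) by (simp add: add_nonneg_pos)
  ultimately show ?thesis by blast
qed

end
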